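(* Let $G_0,G_1\in\mathbb{Z}$ and let $(G_n)_{n\ge 0}$ be defined by $G_n=G_{n-1}+G_{n-2}$ for $n\ge 2$. For every integer $k \geq 1$, $$\mathcal{G}^2_{G_0,G_1}(k) = \gcd\left(G_k G_{k+1} - G_0 G_1,\; G_{k+1}^2 - G_1^2,\; G_{k+2}^2 - G_2^2\right),$$ where $\mathcal{G}^2_{G_0,G_1}(k)$ denotes the greatest common divisor of all the integers $\sum_{i=1}^k G_{n+i}^2$ for $n \ge 0$.
   Context: $(G_n)_{n\ge0}$ is a generalized Fibonacci (Gibonacci) sequence with arbitrary integer initial values $G_0,G_1$. $\mathcal{G}^2_{G_0,G_1}(k)=\gcd\{\sum_{i=1}^k G_{n+i}^2 : n\ge 0\}$, the gcd of the infinitely many sums of $k$ consecutive squares starting after index $n$ (taken nonnegative). *)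

theory Defs
  imports Main
begin

fun gib :: "int \<Rightarrow> int \<Rightarrow> nat \<Rightarrow> int" where
  "gib a b 0 = a"
| "gib a b (Suc 0) = b"
| "gib a b (Suc (Suc n)) = gib a b (Suc n) + gib a b n"

definition gibSqGcd :: "int \<Rightarrow> int \<Rightarrow> nat \<Rightarrow> int" where
  "gibSqGcd a b k = Gcd {(\<Sum>i=1..k. (gib a b (n + i))^2) | n. True}"

end

theory Submission
  imports Defs
begin

text \<open>The squares of a Gibonacci sequence satisfy the linear recurrence
  \<open>x(n+3) = 2 x(n+2) + 2 x(n+1) - x(n)\<close>, and by linearity so does the sequence of window
  sums \<open>S(n) = G(n+1)\<^sup>2 + ... + G(n+k)\<^sup>2\<close>. Hence every \<open>S(n)\<close> is an integer combination
  of \<open>S(0), S(1), S(2)\<close>, and the gcd of all window sums is \<open>gcd(S(0), S(1) - S(0), S(2) - S(1))\<close>.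
  The two differences telescope to \<open>G(k+1)\<^sup>2 - G(1)\<^sup>2\<close> and \<open>G(k+2)\<^sup>2 - G(2)\<^sup>2\<close>, while
  \<open>S(0) = G(k) G(k+1) - G(0) G(1)\<close> is the classical sum-of-squares identity.\<close>

definition linear_recurrence :: "(nat \<Rightarrow> 'a::comm_semiring_1) \<Rightarrow> nat \<Rightarrow> (nat \<Rightarrow> 'a) \<Rightarrow> bool" where
  "linear_recurrence c m f \<longleftrightarrow> (\<forall>n. f (n + m) = (\<Sum>j<m. c j * f (n + j)))"

lemma linear_recurrence_sum_shifts:
  assumes "linear_recurrence c m f"
  shows "linear_recurrence c m (\<lambda>n. \<Sum>i\<in>A. f (n + i))"
  unfolding linear_recurrence_def
proof
  fix n
  have rec: "f (k + m) = (\<Sum>j<m. c j * f (k + j))" for k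
    using assms by (simp add: linear_recurrence_def)
  have "(\<Sum>i\<in>A. f (n + m + i)) = (\<Sum>i\<in>A. f (n + i + m))"
    by (simp add: ac_simps)
  also have "\<dots> = (\<Sum>i\<in>A. \<Sum>j<m. c j * f (n + i + j))"
    by (simp only: rec)
  also have "\<dots> = (\<Sum>j<m. c j * (\<Sum>i\<in>A. f (n + j + i)))"
    by (subst sum.swap) (simp add: sum_distrib_left ac_simps)
  finally show "(\<Sum>i\<in>A. f (n + m + i)) = (\<Sum>j<m. c j * (\<Sum>i\<in>A. f (n + j + i)))" .
qed

lemma Gcd_range_linear_recurrence:
  fixes f :: "nat \<Rightarrow> 'a::semiring_Gcd"
  assumes "linear_recurrence c m f"
  shows "Gcd (range f) = Gcd (f ` {..<m})"
proof -
  have dvd_all: "Gcd (f ` {..<m}) dvd f n" for n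
  proof (induction n rule: less_induct)
    case (less n)
    show ?case
    proof (cases "n < m")
      case True
      then show ?thesis by (simp add: Gcd_dvd)
    next
      case False
      then have "f n = (\<Sum>j<m. c j * f (n - m + j))"
        using assms unfolding linear_recurrence_def by (metis le_add_diff_inverse2 not_less)
      moreover have "Gcd (f ` {..<m}) dvd f (n - m + j)" if "j < m" for j
        using False that by (intro less.IH) simp
      ultimately show ?thesis by (auto intro!: dvd_sum dvd_mult)
    qed
  qed
  show ?thesis
    by (rule Gcd_eqI) (auto simp: dvd_all intro: Gcd_greatest)
qed

lemma gcd_partial_sums:
  fixes x y z :: "'a::semiring_gcd"
  shows "gcd x (gcd (x + y) (x + y + z)) = gcd x (gcd y z)"
  by (metis gcd.assoc gcd_add2)

lemma gcd_successive_differences: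
  fixes x y z :: "'a::ring_gcd"
  shows "gcd x (gcd y z) = gcd x (gcd (y - x) (z - y))"
  using gcd_partial_sums[of x "y - x" "z - y"] by simp

lemma sum_window_Suc_diff:
  fixes f :: "nat \<Rightarrow> 'a::ab_group_add"
  shows "(\<Sum>i=1..k. f (Suc n + i)) - (\<Sum>i=1..k. f (n + i)) = f (n + k + 1) - f (n + 1)"
  by (induction k) (simp_all add: sum.cl_ivl_Suc algebra_simps)

lemma gib_square_linear_recurrence:
  "linear_recurrence (\<lambda>j. if j = 0 then -1 else 2) 3 (\<lambda>n. (gib a b n)\<^sup>2)"
  unfolding linear_recurrence_def
proof
  fix n
  have "gib a b (n + 2) = gib a b (n + 1) + gib a b n"
    and "gib a b (n + 3) = gib a b (n + 2) + gib a b (n + 1)"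
    by (simp_all add: numeral_eq_Suc)
  then show "(gib a b (n + 3))\<^sup>2 =
      (\<Sum>j<3. (if j = 0 then -1 else 2) * (gib a b (n + j))\<^sup>2)"
    by (simp add: numeral_3_eq_3 numeral_2_eq_2 power2_eq_square algebra_simps)
qed

lemma gib_sum_squares:
  "(\<Sum>i=1..m. (gib a b i)\<^sup>2) = gib a b m * gib a b (m + 1) - gib a b 0 * gib a b 1"
proof (induction m)
  case 0
  then show ?case by simp
next
  case (Suc m)
  have "gib a b (Suc m + 1) = gib a b (Suc m) + gib a b m" by simp
  then show ?case using Suc by (simp add: power2_eq_square algebra_simps)
qed

theorem theorem3p4:
  fixes a b :: int and k :: nat
  assumes "k \<ge> 1"
  shows "gibSqGcd a b k =
    gcd (gib a b k * gib a b (k+1) - gib a b 0 * gib a b 1)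
      (gcd ((gib a b (k+1))^2 - (gib a b 1)^2) ((gib a b (k+2))^2 - (gib a b 2)^2))"
proof -
  define S where "S n = (\<Sum>i\<in>{1..k}. (gib a b (n + i))\<^sup>2)" for n
  have "linear_recurrence (\<lambda>j. if j = 0 then -1 else 2) 3 S"
    unfolding S_def by (rule linear_recurrence_sum_shifts[OF gib_square_linear_recurrence])
  have S0: "S 0 = gib a b k * gib a b (k+1) - gib a b 0 * gib a b 1"
    using gib_sum_squares[of a b k] by (simp add: S_def)
  have S_Suc: "S (Suc n) - S n = (gib a b (n + k + 1))\<^sup>2 - (gib a b (n + 1))\<^sup>2" for n
    unfolding S_def by (rule sum_window_Suc_diff)
  have S1: "S 1 - S 0 = (gib a b (k+1))^2 - (gib a b 1)^2"
    using S_Suc[of 0] by simp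
  have S2: "S 2 - S 1 = (gib a b (k+2))^2 - (gib a b 2)^2"
    using S_Suc[of 1] by (simp add: numeral_2_eq_2)
  have "gibSqGcd a b k = Gcd (range S)"
    unfolding gibSqGcd_def S_def by (simp add: full_SetCompr_eq)
  also have "\<dots> = Gcd (S ` {..<3})"
    by (rule Gcd_range_linear_recurrence) fact
  also have "\<dots> = gcd (S 0) (gcd (S 1) (S 2))"
    by (simp add: numeral_3_eq_3 numeral_2_eq_2 lessThan_Suc insert_commute)
  also have "\<dots> = gcd (S 0) (gcd (S 1 - S 0) (S 2 - S 1))"
    by (rule gcd_successive_differences)
  finally show ?thesis
    unfolding S1 S2 by (simp only: S0)
qed

end
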